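(* Let $0<a,b<1$, $r>as$, $s>br$, let $(\xi_n)$, $(\chi_n)$ satisfy Assumption 1, and let $\alpha,\beta\in[0,1)$, $\ell\in[0,\min\{\alpha,1-\alpha\})$, $\bar\ell\in[0,\min\{\beta,1-\beta\})$. Suppose there exist $\lambda\in(0,1)$ and a norm on $\mathbb R^2$ (with induced matrix norm $\|\cdot\|$) such that for every $n\in\mathbb N$, almost surely, $\|J_{\alpha+\ell\xi_n,\beta+\bar\ell\chi_n}\|\le\lambda$. Then there is $\delta_0>0$ such that every solution $(x_n,y_n)$ of $$x_{n+1}=x_n[(1-\alpha-\ell\xi_{n+1})e^{r-x_n-ay_n}+\alpha+\ell\xi_{n+1}],\quad y_{n+1}=y_n[(1-\beta-\bar\ell\chi_{n+1})e^{s-bx_n-y_n}+\beta+\bar\ell\chi_{n+1}]$$ with $(x_0,y_0)\in B(K,\delta_0)$ satisfies $\lim_{n\to\infty}(x_n,y_n)=K$ almost surely.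
   Context: $p=\frac{r-as}{1-ab}$, $q=\frac{s-br}{1-ab}$, $K=(p,q)$; $J_{\alpha,\beta}=\begin{pmatrix}1-(1-\alpha)p & -a(1-\alpha)p\\ -b(1-\beta)q & 1-(1-\beta)q\end{pmatrix}$. Assumption 1: on a probability space, $(\xi_n)_{n\in\mathbb N}$ and $(\chi_n)_{n\in\mathbb N}$ are mutually independent sequences, each consisting of independent identically distributed random variables, with $|\xi_n|\le1$, $|\chi_n|\le1$ for all $n$. *)

theory Defs
  imports "HOL-Probability.Probability"
begin

definition pK :: "real \<Rightarrow> real \<Rightarrow> real \<Rightarrow> real \<Rightarrow> real" where
  "pK a b r s = (r - a * s) / (1 - a * b)"

definition qK :: "real \<Rightarrow> real \<Rightarrow> real \<Rightarrow> real \<Rightarrow> real" where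
  "qK a b r s = (s - b * r) / (1 - a * b)"

definition Jmat :: "real \<Rightarrow> real \<Rightarrow> real \<Rightarrow> real \<Rightarrow> real \<Rightarrow> real \<Rightarrow> real^2^2" where
  "Jmat a b r s al be =
     (let p = pK a b r s; q = qK a b r s in
      vector [vector [1 - (1 - al) * p, - a * (1 - al) * p],
              vector [- b * (1 - be) * q, 1 - (1 - be) * q]])"

definition is_norm_R2 :: "(real^2 \<Rightarrow> real) \<Rightarrow> bool" where
  "is_norm_R2 N \<longleftrightarrow>
     (\<forall>x. 0 \<le> N x) \<and> (\<forall>x. N x = 0 \<longleftrightarrow> x = 0) \<and>
     (\<forall>c x. N (c *\<^sub>R x) = \<bar>c\<bar> * N x) \<and>
     (\<forall>x y. N (x + y) \<le> N x + N y)"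

definition induced_norm :: "(real^2 \<Rightarrow> real) \<Rightarrow> real^2^2 \<Rightarrow> real" where
  "induced_norm N A = (SUP x\<in>{x. N x = 1}. N (A *v x))"

primrec traj :: "real \<Rightarrow> real \<Rightarrow> real \<Rightarrow> real \<Rightarrow> real \<Rightarrow> real \<Rightarrow> real \<Rightarrow> real
   \<Rightarrow> (nat \<Rightarrow> real) \<Rightarrow> (nat \<Rightarrow> real) \<Rightarrow> real \<Rightarrow> real \<Rightarrow> nat \<Rightarrow> real \<times> real" where
  "traj a b r s al be l l' xi chi x0 y0 0 = (x0, y0)"
| "traj a b r s al be l l' xi chi x0 y0 (Suc n) =
     (let (x, y) = traj a b r s al be l l' xi chi x0 y0 n in
      (x * ((1 - al - l * xi (Suc n)) * exp (r - x - a * y) + al + l * xi (Suc n)),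
       y * ((1 - be - l' * chi (Suc n)) * exp (s - b * x - y) + be + l' * chi (Suc n))))"

end

(*
  For all rates al, be in [0, 1] the point K = (p, q) is a fixed point of the map
  F(x, y) = (x ((1 - al) exp (r - x - a y) + al), y ((1 - be) exp (s - b x - y) + be)),
  because r = p + a q and s = b p + q, and Jmat a b r s al be is the Jacobian of F at K.
  The estimate |exp t - 1 - t| <= t^2 for t <= 1 bounds the linearisation error of F at K
  by c |w - K|^2 with c independent of al and be. As all norms on R^2 are equivalent, on a
  small N-ball around K every such map whose Jacobian has induced norm at most lam contracts
  the N-distance to K by the factor (1 + lam) / 2. Along almost every noise path all the
  Jacobians obey this bound, so the trajectory converges geometrically to K.
*)

theory Submission
  imports Defs
begin

lemma is_norm_R2_nonneg: "is_norm_R2 N \<Longrightarrow> 0 \<le> N x"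
  unfolding is_norm_R2_def by blast

lemma is_norm_R2_pos: "is_norm_R2 N \<Longrightarrow> x \<noteq> 0 \<Longrightarrow> 0 < N x"
  unfolding is_norm_R2_def by (metis less_eq_real_def)

lemma is_norm_R2_zero: "is_norm_R2 N \<Longrightarrow> N 0 = 0"
  unfolding is_norm_R2_def by blast

lemma is_norm_R2_scaleR: "is_norm_R2 N \<Longrightarrow> N (c *\<^sub>R x) = \<bar>c\<bar> * N x"
  unfolding is_norm_R2_def by blast

lemma is_norm_R2_triangle: "is_norm_R2 N \<Longrightarrow> N (x + y) \<le> N x + N y"
  unfolding is_norm_R2_def by blast

lemma is_norm_R2_abs_diff_le:
  assumes N: "is_norm_R2 N"
  shows "\<bar>N x - N y\<bar> \<le> N (x - y)"
proof -
  have "N (y - x) = N (x - y)"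
    using is_norm_R2_scaleR[OF N, of "-1" "x - y"] by simp
  then show ?thesis
    using is_norm_R2_triangle[OF N, of "x - y" y] is_norm_R2_triangle[OF N, of "y - x" x]
    by simp
qed

lemma is_norm_R2_le_norm:
  assumes N: "is_norm_R2 N"
  obtains C where "0 < C" "\<And>z. N z \<le> C * norm z"
proof
  let ?C = "N (vector [1, 0]) + N (vector [0, 1])"
  have "(vector [1, 0] :: real^2) \<noteq> 0"
    by (metis vector_2(1) zero_index zero_neq_one)
  then show "0 < ?C"
    using is_norm_R2_pos[OF N] is_norm_R2_nonneg[OF N] by (simp add: add_pos_nonneg)
  fix z :: "real^2"
  have "z = z$1 *\<^sub>R vector [1, 0] + z$2 *\<^sub>R vector [0, 1]"
    by (simp add: vec_eq_iff forall_2)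
  then have "N z \<le> \<bar>z$1\<bar> * N (vector [1, 0]) + \<bar>z$2\<bar> * N (vector [0, 1])"
    by (metis N is_norm_R2_scaleR is_norm_R2_triangle)
  also have "\<dots> \<le> norm z * N (vector [1, 0]) + norm z * N (vector [0, 1])"
    using is_norm_R2_nonneg[OF N] component_le_norm_cart
    by (intro add_mono mult_right_mono) auto
  finally show "N z \<le> ?C * norm z"
    by (simp add: algebra_simps)
qed

lemma is_norm_R2_ge_norm:
  assumes N: "is_norm_R2 N"
  obtains m where "0 < m" "\<And>z. m * norm z \<le> N z"
proof -
  obtain C where C: "0 < C" "\<And>z. N z \<le> C * norm z"
    using is_norm_R2_le_norm[OF N] by blast
  have "C-lipschitz_on UNIV N"
  proof (rule lipschitz_onI)
    fix x y :: "real^2"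
    show "dist (N x) (N y) \<le> C * dist x y"
      using is_norm_R2_abs_diff_le[OF N, of x y] C(2)[of "x - y"]
      by (simp add: dist_real_def dist_norm)
  qed (use C in simp)
  then have "continuous_on (sphere 0 1) N"
    using continuous_on_subset lipschitz_on_continuous_on by blast
  then obtain z0 where z0: "z0 \<in> sphere 0 1" "\<And>z. z \<in> sphere 0 1 \<Longrightarrow> N z0 \<le> N z"
    using continuous_attains_inf[OF compact_sphere] by (metis sphere_eq_empty zero_le_one not_le)
  show thesis
  proof
    have "z0 \<noteq> 0"
      using z0(1) by auto
    then show "0 < N z0"
      by (rule is_norm_R2_pos[OF N])
    fix z :: "real^2"
    show "N z0 * norm z \<le> N z"
    proof (cases "z = 0")
      case False
      then have "N z0 \<le> N ((1 / norm z) *\<^sub>R z)"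
        by (intro z0(2)) simp
      also have "\<dots> = N z / norm z"
        using is_norm_R2_scaleR[OF N] by simp
      finally show ?thesis
        using False by (simp add: field_simps)
    qed (simp add: is_norm_R2_zero[OF N])
  qed
qed

lemma is_norm_R2_induced_norm_mult:
  assumes N: "is_norm_R2 N"
  shows "N (A *v x) \<le> induced_norm N A * N x"
proof -
  obtain m where m: "0 < m" "\<And>z. m * norm z \<le> N z"
    using is_norm_R2_ge_norm[OF N] by blast
  obtain C where C: "0 < C" "\<And>z. N z \<le> C * norm z"
    using is_norm_R2_le_norm[OF N] by blast
  obtain B where B: "0 < B" "\<And>z. norm (A *v z) \<le> norm z * B"
    using bounded_linear.pos_bounded[OF matrix_vector_mul_bounded_linear] by blast
  have "N (A *v y) \<le> C * (B / m)" if "N y = 1" for y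
  proof -
    have "norm y \<le> 1 / m"
      using m that by (simp add: field_simps) (metis mult.commute)
    then have "norm (A *v y) \<le> B / m"
      using B order_trans mult_right_mono[of "norm y" "1 / m" B] by fastforce
    then show ?thesis
      using C by (meson mult_left_mono order_trans less_imp_le)
  qed
  then have bdd: "bdd_above ((\<lambda>y. N (A *v y)) ` {y. N y = 1})"
    by (auto intro!: bdd_aboveI)
  show ?thesis
  proof (cases "x = 0")
    case False
    let ?t = "N x"
    have t: "0 < ?t"
      using is_norm_R2_pos[OF N False] .
    have "N (A *v ((1 / ?t) *\<^sub>R x)) \<le> induced_norm N A"
      unfolding induced_norm_def
      using t is_norm_R2_scaleR[OF N] by (intro cSUP_upper bdd) auto
    also have "N (A *v ((1 / ?t) *\<^sub>R x)) = N (A *v x) / ?t"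
      using is_norm_R2_scaleR[OF N] t by (simp add: matrix_vector_mult_scaleR)
    finally show ?thesis
      using t by (simp add: field_simps)
  qed (simp add: is_norm_R2_zero[OF N])
qed

lemma exp_le_one_plus_square:
  fixes t :: real
  assumes "t \<le> 1"
  shows "exp t \<le> 1 + t + t\<^sup>2"
proof (cases "0 \<le> t")
  case True
  then show ?thesis
    using exp_bound assms by simp
next
  case False
  define u where "u = - t"
  have u: "0 < u"
    using False by (simp add: u_def)
  have "0 \<le> (u - 1 / 2)\<^sup>2 + 3 / 4"
    by simp
  also have "\<dots> = 1 - u + u\<^sup>2"
    by (simp add: power2_eq_square algebra_simps)
  finally have pos: "0 \<le> 1 - u + u\<^sup>2" .
  have "1 \<le> (1 + u) * (1 - u + u\<^sup>2)"
    using u by (simp add: algebra_simps power2_eq_square)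
  also have "\<dots> \<le> exp u * (1 - u + u\<^sup>2)"
    using pos exp_ge_add_one_self[of u] by (rule mult_right_mono[rotated])
  finally have "1 / exp u \<le> 1 - u + u\<^sup>2"
    by (simp add: field_simps)
  then show ?thesis
    by (simp add: u_def exp_minus field_simps)
qed

lemma abs_exp_minus_one_minus_le:
  fixes t :: real
  assumes "t \<le> 1"
  shows "\<bar>exp t - 1 - t\<bar> \<le> t\<^sup>2"
  using exp_le_one_plus_square[OF assms] exp_ge_add_one_self[of t] zero_le_power2[of t]
  unfolding abs_le_iff by linarith

text \<open>A coordinate of \<open>ricker_map\<close> at \<open>K + (u, v)\<close> has this form, \<open>w\<close> being the
  displacement of the exponent; \<open>u - (1 - al) p w\<close> is its linear part.\<close>
lemma ricker_factor_remainder: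
  fixes p u w al \<rho> :: real
  assumes "\<bar>u\<bar> \<le> \<rho>" "\<bar>w\<bar> \<le> \<rho>" "\<rho> \<le> 1" "0 \<le> al" "al \<le> 1" "0 \<le> p"
  shows "\<bar>(p + u) * ((1 - al) * exp (- w) + al) - p - (u - (1 - al) * p * w)\<bar> \<le> (p + 2) * \<rho>\<^sup>2"
proof -
  have w2: "w\<^sup>2 \<le> \<rho>\<^sup>2"
    using assms(2) by (metis abs_ge_zero power2_abs power_mono)
  have "- w \<le> 1"
    using assms(2,3) by linarith
  then have e1: "\<bar>exp (- w) - 1 + w\<bar> \<le> \<rho>\<^sup>2"
    using abs_exp_minus_one_minus_le[of "- w"] w2 by simp
  have "\<rho>\<^sup>2 \<le> \<rho>"
    using assms by (simp add: power2_eq_square mult_left_le_one_le)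
  then have e2: "\<bar>exp (- w) - 1\<bar> \<le> 2 * \<rho>"
    using e1 assms(2) by linarith
  have "(p + u) * ((1 - al) * exp (- w) + al) - p - (u - (1 - al) * p * w)
      = (1 - al) * (p * (exp (- w) - 1 + w) + u * (exp (- w) - 1))"
    by (simp add: algebra_simps)
  also have "\<bar>\<dots>\<bar> \<le> \<bar>p * (exp (- w) - 1 + w) + u * (exp (- w) - 1)\<bar>"
    using assms(4,5) by (simp add: abs_mult mult_left_le_one_le)
  also have "\<dots> \<le> p * \<bar>exp (- w) - 1 + w\<bar> + \<bar>u\<bar> * \<bar>exp (- w) - 1\<bar>"
    using assms(6) abs_triangle_ineq[of "p * (exp (- w) - 1 + w)" "u * (exp (- w) - 1)"]
    by (simp add: abs_mult)
  also have "\<dots> \<le> p * \<rho>\<^sup>2 + \<rho> * (2 * \<rho>)"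
    using e1 e2 assms by (intro add_mono mult_mono mult_left_mono) auto
  also have "\<dots> = (p + 2) * \<rho>\<^sup>2"
    by (simp add: algebra_simps power2_eq_square)
  finally show ?thesis .
qed

definition vec2 :: "real \<times> real \<Rightarrow> real^2" where
  "vec2 z = vector [fst z, snd z]"

lemma vec2_nth [simp]: "vec2 z $ 1 = fst z" "vec2 z $ 2 = snd z"
  by (simp_all add: vec2_def)

lemma norm_vec2 [simp]: "norm (vec2 z) = norm z"
  by (cases z) (simp add: vec2_def norm_vec_def L2_set_def sum_2 norm_Pair)

definition ricker_map :: "real \<Rightarrow> real \<Rightarrow> real \<Rightarrow> real \<Rightarrow> real \<Rightarrow> real \<Rightarrow> real \<times> real \<Rightarrow> real \<times> real"
  where "ricker_map a b r s al be z =
    (fst z * ((1 - al) * exp (r - fst z - a * snd z) + al),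
     snd z * ((1 - be) * exp (s - b * fst z - snd z) + be))"

lemma traj_Suc_ricker_map:
  "traj a b r s al be l l' A B x0 y0 (Suc n) =
     ricker_map a b r s (al + l * A (Suc n)) (be + l' * B (Suc n)) (traj a b r s al be l l' A B x0 y0 n)"
  by (cases "traj a b r s al be l l' A B x0 y0 n") (simp add: ricker_map_def algebra_simps)

lemma Jmat_mult_vec:
  "Jmat a b r s al be *v z =
     vector [z$1 - (1 - al) * pK a b r s * (z$1 + a * z$2), z$2 - (1 - be) * qK a b r s * (b * z$1 + z$2)]"
  by (simp add: vec_eq_iff forall_2 matrix_vector_mult_def sum_2 Jmat_def Let_def algebra_simps)

lemma tendsto_zero_of_local_contraction:
  fixes D :: "nat \<Rightarrow> real"
  assumes L: "0 \<le> L" "L < 1" and nonneg: "\<And>n. 0 \<le> D n" and init: "D 0 \<le> \<delta>"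
    and contr: "\<And>n. D n \<le> \<delta> \<Longrightarrow> D (Suc n) \<le> L * D n"
  shows "D \<longlonglongrightarrow> 0"
proof -
  have geom: "D n \<le> L ^ n * D 0" for n
  proof (induction n)
    case (Suc n)
    have "L ^ n * D 0 \<le> D 0"
      using L nonneg[of 0] by (simp add: mult_left_le_one_le power_le_one)
    then have "D n \<le> \<delta>"
      using Suc.IH init by linarith
    then have "D (Suc n) \<le> L * D n"
      by (rule contr)
    also have "\<dots> \<le> L * (L ^ n * D 0)"
      using Suc.IH L(1) by (rule mult_left_mono)
    finally show ?case
      by simp
  qed simp
  have "\<forall>n. norm (D n) \<le> L ^ n * D 0"
    using geom nonneg by simp
  moreover have "(\<lambda>n. L ^ n * D 0) \<longlonglongrightarrow> 0"
    using L by (intro tendsto_mult_left_zero LIMSEQ_power_zero) auto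
  ultimately show ?thesis
    by (rule Lim_null_comparison[OF always_eventually])
qed

lemma traj_tendsto_of_local_contraction:
  assumes N: "is_norm_R2 N" and L: "0 \<le> L" "L < 1"
    and contr: "\<And>n w. N (vec2 (w - k)) \<le> \<delta> \<Longrightarrow>
      N (vec2 (ricker_map a b r s (al + l * A (Suc n)) (be + l' * B (Suc n)) w - k)) \<le> L * N (vec2 (w - k))"
    and init: "N (vec2 ((x0, y0) - k)) \<le> \<delta>"
  shows "(\<lambda>n. traj a b r s al be l l' A B x0 y0 n) \<longlonglongrightarrow> k"
proof -
  let ?T = "traj a b r s al be l l' A B x0 y0"
  obtain m where m: "0 < m" "\<And>z. m * norm z \<le> N z"
    using is_norm_R2_ge_norm[OF N] by blast
  have conv: "(\<lambda>n. N (vec2 (?T n - k))) \<longlonglongrightarrow> 0"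
  proof (rule tendsto_zero_of_local_contraction[OF L])
    show "N (vec2 (?T 0 - k)) \<le> \<delta>"
      using init by simp
    show "N (vec2 (?T (Suc n) - k)) \<le> L * N (vec2 (?T n - k))" if "N (vec2 (?T n - k)) \<le> \<delta>" for n
      unfolding traj_Suc_ricker_map by (rule contr[OF that])
  qed (rule is_norm_R2_nonneg[OF N])
  have bound: "\<forall>n. norm (dist (?T n) k) \<le> N (vec2 (?T n - k)) / m"
  proof
    fix n
    show "norm (dist (?T n) k) \<le> N (vec2 (?T n - k)) / m"
      using m(1) m(2)[of "vec2 (?T n - k)"] by (simp add: dist_norm pos_le_divide_eq mult.commute)
  qed
  have "(\<lambda>n. dist (?T n) k) \<longlonglongrightarrow> 0"
    using bound tendsto_divide_zero[OF conv] by (rule Lim_null_comparison[OF always_eventually])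
  then show ?thesis
    by (rule tendsto_dist_iff[THEN iffD2])
qed

locale ricker_competition =
  fixes a b r s :: real
  assumes a: "0 < a" "a < 1" and b: "0 < b" "b < 1" and r: "a * s < r" and s: "b * r < s"
begin

abbreviation "p \<equiv> pK a b r s"
abbreviation "q \<equiv> qK a b r s"
abbreviation "K \<equiv> (p, q)"

lemma one_minus_ab_pos: "0 < 1 - a * b"
proof -
  have "a * b < a * 1"
    using a b by (intro mult_strict_left_mono) auto
  then show ?thesis
    using a by linarith
qed

lemma p_pos: "0 < p"
  using one_minus_ab_pos r by (simp add: pK_def)

lemma q_pos: "0 < q"
  using one_minus_ab_pos s by (simp add: qK_def)

lemma pq_mult_one_minus_ab: "p * (1 - a * b) = r - a * s" "q * (1 - a * b) = s - b * r"
  using one_minus_ab_pos by (simp_all add: pK_def qK_def)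

lemma r_eq: "r = p + a * q"
proof -
  have "(p + a * q) * (1 - a * b) = p * (1 - a * b) + a * (q * (1 - a * b))"
    by (simp add: algebra_simps)
  also have "\<dots> = r * (1 - a * b)"
    unfolding pq_mult_one_minus_ab by (simp add: algebra_simps)
  finally show ?thesis
    using one_minus_ab_pos by simp
qed

lemma s_eq: "s = b * p + q"
proof -
  have "(b * p + q) * (1 - a * b) = b * (p * (1 - a * b)) + q * (1 - a * b)"
    by (simp add: algebra_simps)
  also have "\<dots> = s * (1 - a * b)"
    unfolding pq_mult_one_minus_ab by (simp add: algebra_simps)
  finally show ?thesis
    using one_minus_ab_pos by simp
qed

lemma ricker_map_linearization:
  assumes al: "0 \<le> al" "al \<le> 1" and be: "0 \<le> be" "be \<le> 1" and small: "norm (w - K) \<le> 1 / 2"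
  shows "norm (vec2 (ricker_map a b r s al be w - K) - Jmat a b r s al be *v vec2 (w - K))
           \<le> 4 * (p + q + 4) * (norm (w - K))\<^sup>2"
proof -
  define u v where "u = fst w - p" and "v = snd w - q"
  have w: "w = (p + u, q + v)"
    by (simp add: u_def v_def)
  define \<rho> where "\<rho> = 2 * norm (w - K)"
  have \<rho>: "\<rho> \<le> 1"
    using small by (simp add: \<rho>_def)
  have uv: "\<bar>u\<bar> \<le> norm (w - K)" "\<bar>v\<bar> \<le> norm (w - K)"
    using norm_fst_le[of u v] norm_snd_le[of v u] by (simp_all add: w)
  have "\<bar>a * v\<bar> \<le> \<bar>v\<bar>" "\<bar>b * u\<bar> \<le> \<bar>u\<bar>"
    using a b by (simp_all add: abs_mult mult_left_le_one_le)
  then have u: "\<bar>u\<bar> \<le> \<rho>" and v: "\<bar>v\<bar> \<le> \<rho>"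
    and wu: "\<bar>u + a * v\<bar> \<le> \<rho>" and wv: "\<bar>b * u + v\<bar> \<le> \<rho>"
    using uv by (auto simp: \<rho>_def)
  have "r - (p + u) - a * (q + v) = - (u + a * v)" "s - b * (p + u) - (q + v) = - (b * u + v)"
    by (subst r_eq, simp add: algebra_simps) (subst s_eq, simp add: algebra_simps)
  then have F: "ricker_map a b r s al be w =
      ((p + u) * ((1 - al) * exp (- (u + a * v)) + al), (q + v) * ((1 - be) * exp (- (b * u + v)) + be))"
    by (simp only: w ricker_map_def fst_conv snd_conv)
  have R1: "\<bar>(p + u) * ((1 - al) * exp (- (u + a * v)) + al) - p - (u - (1 - al) * p * (u + a * v))\<bar>
      \<le> (p + 2) * \<rho>\<^sup>2"
    using p_pos by (intro ricker_factor_remainder[OF u wu \<rho> al]) simp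
  have R2: "\<bar>(q + v) * ((1 - be) * exp (- (b * u + v)) + be) - q - (v - (1 - be) * q * (b * u + v))\<bar>
      \<le> (q + 2) * \<rho>\<^sup>2"
    using q_pos by (intro ricker_factor_remainder[OF v wv \<rho> be]) simp
  have l1: "norm (vector [x, y] :: real^2) \<le> \<bar>x\<bar> + \<bar>y\<bar>" for x y
    using norm_le_l1_cart[of "vector [x, y] :: real^2"] by (simp add: sum_2)
  have "vec2 (ricker_map a b r s al be w - K) - Jmat a b r s al be *v vec2 (w - K) = vector
      [(p + u) * ((1 - al) * exp (- (u + a * v)) + al) - p - (u - (1 - al) * p * (u + a * v)),
       (q + v) * ((1 - be) * exp (- (b * u + v)) + be) - q - (v - (1 - be) * q * (b * u + v))]"
    unfolding F by (simp add: Jmat_mult_vec vec_eq_iff forall_2 u_def v_def)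
  also have "norm \<dots> \<le> (p + 2) * \<rho>\<^sup>2 + (q + 2) * \<rho>\<^sup>2"
    using l1 R1 R2 by (meson add_mono order_trans)
  also have "\<dots> = 4 * (p + q + 4) * (norm (w - K))\<^sup>2"
    by (simp add: \<rho>_def power2_eq_square algebra_simps)
  finally show ?thesis .
qed

lemma ricker_map_local_contraction:
  assumes N: "is_norm_R2 N" and lam: "lam < 1"
  obtains \<delta> where "0 < \<delta>"
    and "\<And>al be w. 0 \<le> al \<Longrightarrow> al \<le> 1 \<Longrightarrow> 0 \<le> be \<Longrightarrow> be \<le> 1 \<Longrightarrow>
           induced_norm N (Jmat a b r s al be) \<le> lam \<Longrightarrow> N (vec2 (w - K)) \<le> \<delta> \<Longrightarrow>
           N (vec2 (ricker_map a b r s al be w - K)) \<le> (1 + lam) / 2 * N (vec2 (w - K))"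
proof -
  obtain m where m: "0 < m" "\<And>z. m * norm z \<le> N z"
    using is_norm_R2_ge_norm[OF N] by blast
  obtain C where C: "0 < C" "\<And>z. N z \<le> C * norm z"
    using is_norm_R2_le_norm[OF N] by blast
  define c where "c = 4 * (p + q + 4)"
  have c: "0 < c"
    using p_pos q_pos by (simp add: c_def)
  define \<delta> where "\<delta> = min (m / 2) ((1 - lam) * m\<^sup>2 / (2 * C * c))"
  show thesis
  proof
    show "0 < \<delta>"
      using m C c lam by (simp add: \<delta>_def)
    fix al be w
    assume al: "0 \<le> al" "al \<le> 1" and be: "0 \<le> be" "be \<le> 1"
      and J: "induced_norm N (Jmat a b r s al be) \<le> lam" and close: "N (vec2 (w - K)) \<le> \<delta>"
    let ?z = "vec2 (w - K)"
    let ?J = "Jmat a b r s al be"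
    let ?e = "vec2 (ricker_map a b r s al be w - K) - ?J *v ?z"
    have nz: "norm (w - K) \<le> N ?z / m"
      using m(2)[of ?z] m(1) by (simp add: pos_le_divide_eq mult.commute)
    moreover have "N ?z / m \<le> 1 / 2"
      using close m(1) by (simp add: \<delta>_def divide_le_eq)
    ultimately have "norm (w - K) \<le> 1 / 2"
      by linarith
    then have "norm ?e \<le> c * (norm (w - K))\<^sup>2"
      unfolding c_def by (rule ricker_map_linearization[OF al be])
    also have "\<dots> \<le> c * (N ?z / m)\<^sup>2"
      using nz c by (intro mult_left_mono power_mono) auto
    finally have "N ?e \<le> C * (c * (N ?z / m)\<^sup>2)"
      using C by (meson mult_left_mono order_trans less_imp_le)
    also have "\<dots> = (C * c * N ?z / m\<^sup>2) * N ?z"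
      by (simp add: power2_eq_square field_simps)
    also have "\<dots> \<le> (1 - lam) / 2 * N ?z"
    proof (rule mult_right_mono)
      have "N ?z \<le> (1 - lam) * m\<^sup>2 / (2 * C * c)"
        using close by (simp add: \<delta>_def)
      then show "C * c * N ?z / m\<^sup>2 \<le> (1 - lam) / 2"
        using m(1) C(1) c by (simp add: field_simps)
    qed (rule is_norm_R2_nonneg[OF N])
    finally have e: "N ?e \<le> (1 - lam) / 2 * N ?z" .
    have "N (vec2 (ricker_map a b r s al be w - K)) \<le> N (?J *v ?z) + N ?e"
      using is_norm_R2_triangle[OF N, of "?J *v ?z" ?e] by simp
    also have "\<dots> \<le> lam * N ?z + (1 - lam) / 2 * N ?z"
      using is_norm_R2_induced_norm_mult[OF N, of ?J ?z] J is_norm_R2_nonneg[OF N, of ?z] e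
      by (meson add_mono mult_right_mono order_trans)
    finally show "N (vec2 (ricker_map a b r s al be w - K)) \<le> (1 + lam) / 2 * N ?z"
      by (simp add: field_simps)
  qed
qed

lemma traj_tendsto_equilibrium:
  assumes N: "is_norm_R2 N" and lam: "0 < lam" "lam < 1"
  obtains \<delta> where "0 < \<delta>"
    and "\<And>(A :: nat \<Rightarrow> real) B x0 y0. (\<And>n. 0 \<le> al + l * A n \<and> al + l * A n \<le> 1) \<Longrightarrow>
           (\<And>n. 0 \<le> be + l' * B n \<and> be + l' * B n \<le> 1) \<Longrightarrow>
           (\<And>n. induced_norm N (Jmat a b r s (al + l * A n) (be + l' * B n)) \<le> lam) \<Longrightarrow>
           dist (x0, y0) K < \<delta> \<Longrightarrow> (\<lambda>n. traj a b r s al be l l' A B x0 y0 n) \<longlonglongrightarrow> K"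
proof -
  obtain \<delta> where \<delta>: "0 < \<delta>" and contr: "\<And>al be w. 0 \<le> al \<Longrightarrow> al \<le> 1 \<Longrightarrow> 0 \<le> be \<Longrightarrow> be \<le> 1 \<Longrightarrow>
      induced_norm N (Jmat a b r s al be) \<le> lam \<Longrightarrow> N (vec2 (w - K)) \<le> \<delta> \<Longrightarrow>
      N (vec2 (ricker_map a b r s al be w - K)) \<le> (1 + lam) / 2 * N (vec2 (w - K))"
    using ricker_map_local_contraction[OF N lam(2)] by blast
  obtain C where C: "0 < C" "\<And>z. N z \<le> C * norm z"
    using is_norm_R2_le_norm[OF N] by blast
  show thesis
  proof
    show "0 < \<delta> / C"
      using \<delta> C by simp
    fix A B :: "nat \<Rightarrow> real" and x0 y0 :: real
    assume rates: "\<And>n. 0 \<le> al + l * A n \<and> al + l * A n \<le> 1" "\<And>n. 0 \<le> be + l' * B n \<and> be + l' * B n \<le> 1"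
      and J: "\<And>n. induced_norm N (Jmat a b r s (al + l * A n) (be + l' * B n)) \<le> lam"
      and "dist (x0, y0) K < \<delta> / C"
    then have "N (vec2 ((x0, y0) - K)) \<le> \<delta>"
      using C(2)[of "vec2 ((x0, y0) - K)"] C(1) by (simp add: dist_norm pos_less_divide_eq mult.commute)
    then show "(\<lambda>n. traj a b r s al be l l' A B x0 y0 n) \<longlonglongrightarrow> K"
      using lam rates J by (intro traj_tendsto_of_local_contraction[OF N, where L = "(1 + lam) / 2"] contr) auto
  qed
qed

end

lemma perturbed_rate_bounds:
  fixes al l e :: real
  assumes "0 \<le> l" "l < min al (1 - al)" "\<bar>e\<bar> \<le> 1"
  shows "0 \<le> al + l * e" "al + l * e \<le> 1"
proof -
  have "\<bar>l * e\<bar> \<le> l"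
    using assms by (simp add: abs_mult mult_right_le_one_le)
  then show "0 \<le> al + l * e" "al + l * e \<le> 1"
    using assms(2) by (auto simp: abs_le_iff)
qed

theorem mainTheorem11:
  fixes M :: "'w measure"
    and xi chi :: "nat \<Rightarrow> 'w \<Rightarrow> real"
    and a b r s al be l l' lam :: real
    and N :: "real^2 \<Rightarrow> real"
  assumes "prob_space M"
    and "\<And>n. xi n \<in> borel_measurable M" and "\<And>n. chi n \<in> borel_measurable M"
    and "prob_space.indep_vars M (\<lambda>_. borel)
           (\<lambda>i. case i of Inl n \<Rightarrow> xi n | Inr n \<Rightarrow> chi n) (UNIV :: (nat + nat) set)"
    and "\<And>n. distr M borel (xi n) = distr M borel (xi 0)"
    and "\<And>n. distr M borel (chi n) = distr M borel (chi 0)"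
    and "\<And>n w. w \<in> space M \<Longrightarrow> \<bar>xi n w\<bar> \<le> 1"
    and "\<And>n w. w \<in> space M \<Longrightarrow> \<bar>chi n w\<bar> \<le> 1"
    and "0 < a" "a < 1" "0 < b" "b < 1" "r > a * s" "s > b * r"
    and "0 \<le> al" "al < 1" "0 \<le> be" "be < 1"
    and "0 \<le> l" "l < min al (1 - al)" "0 \<le> l'" "l' < min be (1 - be)"
    and "0 < lam" "lam < 1"
    and "is_norm_R2 N"
    and "\<And>n. AE w in M. induced_norm N (Jmat a b r s (al + l * xi n w) (be + l' * chi n w)) \<le> lam"
  shows "\<exists>\<delta>0>0. \<forall>x0 y0. dist (x0, y0) (pK a b r s, qK a b r s) < \<delta>0 \<longrightarrow>
           (AE w in M. (\<lambda>n. traj a b r s al be l l' (\<lambda>k. xi k w) (\<lambda>k. chi k w) x0 y0 n)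
                         \<longlonglongrightarrow> (pK a b r s, qK a b r s))"
proof -
  interpret ricker_competition a b r s
    using assms(9-14) by unfold_locales
  obtain \<delta> where "0 < \<delta>" and stable: "\<And>(A :: nat \<Rightarrow> real) B x0 y0.
      (\<And>n. 0 \<le> al + l * A n \<and> al + l * A n \<le> 1) \<Longrightarrow> (\<And>n. 0 \<le> be + l' * B n \<and> be + l' * B n \<le> 1) \<Longrightarrow>
      (\<And>n. induced_norm N (Jmat a b r s (al + l * A n) (be + l' * B n)) \<le> lam) \<Longrightarrow>
      dist (x0, y0) K < \<delta> \<Longrightarrow> (\<lambda>n. traj a b r s al be l l' A B x0 y0 n) \<longlonglongrightarrow> K"
    using traj_tendsto_equilibrium[OF assms(25) assms(23,24)] by blast
  have "AE w in M. \<forall>n. induced_norm N (Jmat a b r s (al + l * xi n w) (be + l' * chi n w)) \<le> lam"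
    using assms(26) by (simp add: AE_all_countable)
  then have "AE w in M. dist (x0, y0) K < \<delta> \<longrightarrow>
      (\<lambda>n. traj a b r s al be l l' (\<lambda>k. xi k w) (\<lambda>k. chi k w) x0 y0 n) \<longlonglongrightarrow> K" for x0 y0
    using AE_space
  proof eventually_elim
    case (elim w)
    then show ?case
      using perturbed_rate_bounds[OF assms(19,20) assms(7)] perturbed_rate_bounds[OF assms(21,22) assms(8)]
      by (intro impI stable) auto
  qed
  then show ?thesis
    using \<open>0 < \<delta>\<close> by (auto intro: AE_mp)
qed

end
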